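(* Let $\mathbf{A}=[\mathbf{A}_1;\dots;\mathbf{A}_N]\in\mathbb{R}^{NU\times M}$ and $\mathbf{B}=[\mathbf{B}_1,\dots,\mathbf{B}_P]\in\mathbb{R}^{M\times PQ}$ be random matrices, partitioned into row blocks $\mathbf{A}_n\in\mathbb{R}^{U\times M}$ and column blocks $\mathbf{B}_p\in\mathbb{R}^{M\times Q}$, all of whose entries are independent and zero-mean, with the entries of $\mathbf{A}_n$ having variance $\sigma_{A_n}^2$ and those of $\mathbf{B}_p$ having variance $\sigma_{B_p}^2$. Let $\mathbf{C}=\mathbf{A}\mathbf{B}$ with sub-blocks $\mathbf{C}_{np}=\mathbf{A}_n\mathbf{B}_p\in\mathbb{R}^{U\times Q}$. Suppose the $NP$ sub-products are partitioned into $L$ importance classes, class $l\in\{1,\dots,L\}$ containing $n_l$ sub-products, and such that for every sub-product $\mathbf{C}_{np}$ in class $l$ one has $\sigma_{A_n}^2=\sigma_{l,1}^2$ and $\sigma_{B_p}^2=\sigma_{l,2}^2$. The product is computed with the NOW-UEP scheme by $W$ workers whose computation times $T_1,\dots,T_W$ are i.i.d. with CDF $F$; at deadline $T_{\max}$ the parameter server has received the $N(T_{\max})=|\{w: T_w<T_{\max}\}|$ coded products, so that $$P_{N(T_{\max})}(w)=\Pr[N(T_{\max})=w]=\binom{W}{w}\,(1-F(T_{\max}))^{W-w}\,F(T_{\max})^{w}.$$ For each class $l$, let $P_{d,l}(w)$ be the probability that all sub-products of class $l$ are decoded from $w$ received coded products; the estimate $\hat{\mathbf{C}}$ sets $\hat{\mathbf{C}}_{np}=\mathbf{C}_{np}$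 for decoded sub-products and $\hat{\mathbf{C}}_{np}=\mathbf{0}$ otherwise. Assume the worker times and the coding randomness are independent of the entries of $\mathbf{A},\mathbf{B}$. Then the expected loss $\mathcal{L}(T_{\max})=\|\mathbf{C}-\hat{\mathbf{C}}\|_F^2$ satisfies $$\mathbb{E}[\mathcal{L}(T_{\max})]=\sum_{w=0}^{W}P_{N(T_{\max})}(w)\,\mathbb{E}\big[\|\mathbf{C}-\hat{\mathbf{C}}\|_F^2\,\big|\,N(T_{\max})=w\big],$$ where $$\mathbb{E}\big[\|\mathbf{C}-\hat{\mathbf{C}}\|_F^2\,\big|\,N(T_{\max})=w\big]=\sum_{l=1}^{L} n_l\,\big(1-P_{d,l}(w)\big)\,MUQ\,\sigma_{l,1}^2\sigma_{l,2}^2 .$$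
   Context: NOW-UEP (non-overlapping windows unequal error protection) scheme: the sub-products are grouped into $L$ disjoint "windows" (classes) by importance; each worker $w$ draws a class $i$ at random according to window selection probabilities $\Gamma_1,\dots,\Gamma_L$ ($\sum_i\Gamma_i=1$), and receives random linear combinations $\mathbf{W}_A^w=\sum_i\alpha_i^w\mathbf{A}_{\pi_A^w(i)}$ and $\mathbf{W}_B^w=\sum_j\beta_j^w\mathbf{B}_{\pi_B^w(j)}$ of the row/column blocks belonging to the selected class (random coefficients $\alpha,\beta$), and returns $\mathbf{W}_A^w\mathbf{W}_B^w$. The parameter server decodes whichever class sub-products it can recover from the received products. $\|\cdot\|_F$ denotes the Frobenius norm. (The paper notes that $P_{d,l}(w)$ is upper bounded by $\sum_{\mathbf{n}:\sum_i n_i=w}\frac{w!}{n_1!\cdots n_L!}\Gamma_1^{n_1}\cdots\Gamma_L^{n_L}\mathbf{1}(n_l\ge k_l)$ with $k_l$ the number of packets in class $l$, which is tight as the field size grows.) *)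

theory Defs
  imports "HOL-Probability.Probability"
begin

definition cond_prob :: "'a measure \<Rightarrow> 'a set \<Rightarrow> 'a set \<Rightarrow> real" where
  "cond_prob M A B = measure M (A \<inter> B) / measure M B"

definition cond_exp_event :: "'a measure \<Rightarrow> ('a \<Rightarrow> real) \<Rightarrow> 'a set \<Rightarrow> real" where
  "cond_exp_event M X B = (\<integral>x. indicator B x * X x \<partial>M) / measure M B"

text \<open>Block C_np = A_n B_p, entry (u,q): sum over m < M of A_n(u,m) B_p(m,q).
  A n u m is entry (u,m) of block A_n; B p m q is entry (m,q) of block B_p.\<close>
definition blockprod :: "nat \<Rightarrow> (nat \<Rightarrow> nat \<Rightarrow> nat \<Rightarrow> real) \<Rightarrow> (nat \<Rightarrow> nat \<Rightarrow> nat \<Rightarrow> real)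
    \<Rightarrow> nat \<Rightarrow> nat \<Rightarrow> nat \<Rightarrow> nat \<Rightarrow> real" where
  "blockprod M A B n p u q = (\<Sum>m<M. A n u m * B p m q)"

definition loss :: "nat \<Rightarrow> nat \<Rightarrow> nat \<Rightarrow> nat \<Rightarrow> nat \<Rightarrow> (nat \<Rightarrow> nat \<Rightarrow> nat \<Rightarrow> real)
    \<Rightarrow> (nat \<Rightarrow> nat \<Rightarrow> nat \<Rightarrow> real) \<Rightarrow> (nat \<Rightarrow> nat \<Rightarrow> nat) \<Rightarrow> (nat \<Rightarrow> bool) \<Rightarrow> real" where
  "loss N P U M Q A B cls decoded =
     (\<Sum>n<N. \<Sum>p<P. \<Sum>u<U. \<Sum>q<Q.
        (blockprod M A B n p u q - (if decoded (cls n p) then blockprod M A B n p u q else 0))\<^sup>2)"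

definition rcv :: "nat \<Rightarrow> (nat \<Rightarrow> 'a \<Rightarrow> real) \<Rightarrow> real \<Rightarrow> 'a \<Rightarrow> nat set" where
  "rcv W T Tmax \<omega> = {w \<in> {..<W}. T w \<omega> < Tmax}"

end

theory Submission
  imports Defs
begin

text \<open>
  An entry of a sub-product \<open>A\<^sub>n B\<^sub>p\<close> is a sum of \<open>M\<close> products of independent centred
  entries, so the cross terms of its square have mean zero and its second moment is \<open>M\<close> times
  the two block variances. Which classes are decoded depends only on the worker times and the
  coding coefficients, which are independent of the data; hence on the event \<open>N(T\<^sub>m\<^sub>a\<^sub>x) = w\<close>
  the expected squared error of a sub-product is this second moment times the probability that
  its class is not decoded, and grouping the sub-products by class gives the conditional loss.
  Total expectation over the finitely many values of \<open>N(T\<^sub>m\<^sub>a\<^sub>x)\<close> gives the expected loss,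
  and \<open>N(T\<^sub>m\<^sub>a\<^sub>x)\<close> is binomial because each worker finishes strictly before the deadline
  independently with probability \<open>F(T\<^sub>m\<^sub>a\<^sub>x)\<close>, the times having no atom at \<open>T\<^sub>m\<^sub>a\<^sub>x\<close>.
\<close>

section \<open>Independence and second moments\<close>

lemma vimage_sets_comp_subset:
  assumes "X \<in> measurable M S" and "f \<in> measurable S R"
  shows "{(f \<circ> X) -` A \<inter> space M | A. A \<in> sets R} \<subseteq> {X -` A \<inter> space M | A. A \<in> sets S}"
proof safe
  fix A assume "A \<in> sets R"
  then show "\<exists>B. (f \<circ> X) -` A \<inter> space M = X -` B \<inter> space M \<and> B \<in> sets S"
    using measurable_space[OF assms(1)] measurable_sets[OF assms(2)]
    by (intro exI[of _ "f -` A \<inter> space S"]) auto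
qed

lemma (in prob_space) indep_var_compose_of_indep_set_vimage:
  assumes indep: "indep_set {X -` A \<inter> space M | A. A \<in> sets S} {Y -` A \<inter> space M | A. A \<in> sets T}"
    and X: "random_variable S X" and Y: "random_variable T Y"
    and f: "f \<in> measurable S R" and g: "g \<in> measurable T R"
  shows "indep_var R (f \<circ> X) R (g \<circ> Y)"
proof -
  have Int_stable: "Int_stable {V -` A \<inter> space M | A. A \<in> sets R}" for V :: "'a \<Rightarrow> 'd"
  proof (safe intro!: Int_stableI)
    fix A B assume "A \<in> sets R" "B \<in> sets R"
    then show "\<exists>C. (V -` A \<inter> space M) \<inter> (V -` B \<inter> space M) = V -` C \<inter> space M \<and> C \<in> sets R"
      by (intro exI[of _ "A \<inter> B"]) auto
  qed
  have "indep_set {(f \<circ> X) -` A \<inter> space M | A. A \<in> sets R} {(g \<circ> Y) -` A \<inter> space M | A. A \<in> sets R}"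
    using indep vimage_sets_comp_subset[OF X f] vimage_sets_comp_subset[OF Y g]
    unfolding indep_sets2_eq by (meson subset_iff)
  then show ?thesis
    unfolding indep_var_eq using measurable_comp[OF X f] measurable_comp[OF Y g]
    by (auto intro: indep_set_sigma_sets Int_stable)
qed

lemma (in prob_space) expectation_mult_indicator_indep:
  fixes h :: "'b \<Rightarrow> real"
  assumes indep: "indep_set {X -` A \<inter> space M | A. A \<in> sets S} {Y -` A \<inter> space M | A. A \<in> sets T}"
    and X: "random_variable S X" and Y: "random_variable T Y"
    and h: "h \<in> borel_measurable S" and E: "E \<in> sets T" and integrable: "integrable M (\<lambda>\<omega>. h (X \<omega>))"
  shows "integrable M (\<lambda>\<omega>. indicator (Y -` E \<inter> space M) \<omega> * h (X \<omega>))"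
    and "expectation (\<lambda>\<omega>. indicator (Y -` E \<inter> space M) \<omega> * h (X \<omega>))
           = prob (Y -` E \<inter> space M) * expectation (\<lambda>\<omega>. h (X \<omega>))"
proof -
  let ?E = "Y -` E \<inter> space M"
  have "indep_var borel (h \<circ> X) borel (indicator E \<circ> Y)"
    using indep X Y h borel_measurable_indicator[OF E] by (rule indep_var_compose_of_indep_set_vimage)
  then have indep_var: "indep_var borel (\<lambda>\<omega>. h (X \<omega>)) borel (\<lambda>\<omega>. indicator E (Y \<omega>) :: real)"
    by (simp add: comp_def)
  have "?E \<in> events"
    using measurable_sets[OF Y E] .
  then have integrable_indicator: "integrable M (\<lambda>\<omega>. indicator E (Y \<omega>) :: real)"
    and expectation_indicator: "expectation (\<lambda>\<omega>. indicator E (Y \<omega>)) = prob ?E"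
    using Bochner_Integration.integrable_cong[OF refl, of M "indicator ?E" "\<lambda>\<omega>. indicator E (Y \<omega>) :: real"]
      Bochner_Integration.integral_cong[OF refl, of M "indicator ?E" "\<lambda>\<omega>. indicator E (Y \<omega>) :: real"]
    by (auto simp: indicator_def less_top[symmetric] Int_absorb2 sets.sets_into_space)
  have "integrable M (\<lambda>\<omega>. indicator ?E \<omega> * h (X \<omega>)) \<longleftrightarrow> integrable M (\<lambda>\<omega>. h (X \<omega>) * indicator E (Y \<omega>))"
    by (rule Bochner_Integration.integrable_cong) (simp_all add: indicator_def)
  moreover have "expectation (\<lambda>\<omega>. indicator ?E \<omega> * h (X \<omega>))
      = expectation (\<lambda>\<omega>. h (X \<omega>) * indicator E (Y \<omega>))"
    by (rule Bochner_Integration.integral_cong) (simp_all add: indicator_def)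
  ultimately show "integrable M (\<lambda>\<omega>. indicator ?E \<omega> * h (X \<omega>))"
    and "expectation (\<lambda>\<omega>. indicator ?E \<omega> * h (X \<omega>)) = prob ?E * expectation (\<lambda>\<omega>. h (X \<omega>))"
    using indep_var_integrable[OF indep_var integrable integrable_indicator]
      indep_var_lebesgue_integral[OF indep_var integrable integrable_indicator] expectation_indicator
    by simp_all
qed

lemma integral_sum_eq:
  fixes f :: "'i \<Rightarrow> 'a \<Rightarrow> 'b::{banach, second_countable_topology}"
  assumes "\<And>i. i \<in> I \<Longrightarrow> integrable M (f i)" and "\<And>i. i \<in> I \<Longrightarrow> integral\<^sup>L M (f i) = c i"
  shows "integral\<^sup>L M (\<lambda>x. \<Sum>i\<in>I. f i x) = (\<Sum>i\<in>I. c i)"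
  using assms by (simp add: Bochner_Integration.integral_sum)

lemma (in prob_space) expectation_prod_indep_vars_eq_0:
  fixes X :: "'i \<Rightarrow> 'a \<Rightarrow> real"
  assumes "indep_vars (\<lambda>_. borel) X I" and "finite J" "J \<subseteq> I"
    and "j \<in> J" "expectation (X j) = 0" and integrable: "\<And>i. i \<in> J \<Longrightarrow> integrable M (X i)"
  shows "integrable M (\<lambda>x. \<Prod>i\<in>J. X i x)" and "expectation (\<lambda>x. \<Prod>i\<in>J. X i x) = 0"
proof -
  have indep: "indep_vars (\<lambda>_. borel) X J"
    using indep_vars_subset assms(1,3) .
  show "integrable M (\<lambda>x. \<Prod>i\<in>J. X i x)"
    using indep_vars_integrable[OF \<open>finite J\<close> indep integrable] .
  have "(\<Prod>i\<in>J. expectation (X i)) = 0"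
    using assms(2,4,5) by (intro prod_zero) auto
  then show "expectation (\<lambda>x. \<Prod>i\<in>J. X i x) = 0"
    using indep_vars_lebesgue_integral[OF \<open>finite J\<close> indep integrable] by simp
qed

lemma (in prob_space) expectation_square_product_indep:
  fixes X :: "'i \<Rightarrow> 'a \<Rightarrow> real"
  assumes indep: "indep_vars (\<lambda>_. borel) X I" and "i \<in> I" "j \<in> I" "i \<noteq> j"
    and "integrable M (\<lambda>x. (X i x)\<^sup>2)" "integrable M (\<lambda>x. (X j x)\<^sup>2)"
  shows "integrable M (\<lambda>x. (X i x * X j x)\<^sup>2)"
    and "expectation (\<lambda>x. (X i x * X j x)\<^sup>2)
           = expectation (\<lambda>x. (X i x)\<^sup>2) * expectation (\<lambda>x. (X j x)\<^sup>2)"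
proof -
  have indep_squares: "indep_vars (\<lambda>_. borel) (\<lambda>k x. (X k x)\<^sup>2) {i, j}"
    by (rule indep_vars_compose2[OF indep_vars_subset[OF indep]]) (use assms in auto)
  have integrable: "integrable M (\<lambda>x. (X k x)\<^sup>2)" if "k \<in> {i, j}" for k
    using assms that by auto
  have product: "(\<lambda>x. (X i x * X j x)\<^sup>2) = (\<lambda>x. \<Prod>k\<in>{i, j}. (X k x)\<^sup>2)"
    using \<open>i \<noteq> j\<close> by (simp add: power_mult_distrib)
  show "integrable M (\<lambda>x. (X i x * X j x)\<^sup>2)"
    unfolding product by (rule indep_vars_integrable[OF _ indep_squares integrable]) auto
  show "expectation (\<lambda>x. (X i x * X j x)\<^sup>2)
      = expectation (\<lambda>x. (X i x)\<^sup>2) * expectation (\<lambda>x. (X j x)\<^sup>2)"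
    unfolding product using \<open>i \<noteq> j\<close>
    by (subst indep_vars_lebesgue_integral[OF _ indep_squares integrable]) auto
qed

lemma (in prob_space) expectation_square_sum_indep_products:
  fixes X :: "'i \<Rightarrow> 'a \<Rightarrow> real" and a b :: "nat \<Rightarrow> 'i"
  assumes indep: "indep_vars (\<lambda>_. borel) X I"
    and "inj_on a {..<K}" "inj_on b {..<K}" "a ` {..<K} \<inter> b ` {..<K} = {}"
    and "a ` {..<K} \<subseteq> I" "b ` {..<K} \<subseteq> I"
    and mean: "\<And>i. i \<in> I \<Longrightarrow> expectation (X i) = 0"
    and square_integrable: "\<And>i. i \<in> I \<Longrightarrow> integrable M (\<lambda>x. (X i x)\<^sup>2)"
  shows "integrable M (\<lambda>x. (\<Sum>m<K. X (a m) x * X (b m) x)\<^sup>2)"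
    and "expectation (\<lambda>x. (\<Sum>m<K. X (a m) x * X (b m) x)\<^sup>2)
           = (\<Sum>m<K. expectation (\<lambda>x. (X (a m) x)\<^sup>2) * expectation (\<lambda>x. (X (b m) x)\<^sup>2))"
proof -
  define t where "t m m' x = X (a m) x * X (b m) x * (X (a m') x * X (b m') x)" for m m' x
  have distinct: "a m \<noteq> b m'" "m \<noteq> m' \<Longrightarrow> a m \<noteq> a m'" "m \<noteq> m' \<Longrightarrow> b m \<noteq> b m'"
    if "m < K" "m' < K" for m m'
    using assms(2-4) that by (auto dest: inj_onD)
  have in_I: "a m \<in> I" "b m \<in> I" if "m < K" for m
    using assms(5,6) that by auto
  have diagonal: "integrable M (t m m)"
      "expectation (t m m) = expectation (\<lambda>x. (X (a m) x)\<^sup>2) * expectation (\<lambda>x. (X (b m) x)\<^sup>2)"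
    if "m < K" for m
  proof -
    have "t m m = (\<lambda>x. (X (a m) x * X (b m) x)\<^sup>2)"
      by (simp add: t_def fun_eq_iff power2_eq_square)
    then show "integrable M (t m m)"
        "expectation (t m m) = expectation (\<lambda>x. (X (a m) x)\<^sup>2) * expectation (\<lambda>x. (X (b m) x)\<^sup>2)"
      using expectation_square_product_indep[OF indep in_I[OF that] distinct(1)[OF that that]]
        square_integrable in_I[OF that] by simp_all
  qed
  have off_diagonal: "integrable M (t m m')" "expectation (t m m') = 0"
    if "m < K" "m' < K" "m \<noteq> m'" for m m'
  proof -
    let ?J = "{a m, b m, a m', b m'}"
    have "t m m' = (\<lambda>x. \<Prod>i\<in>?J. X i x)"
      using distinct[of m m] distinct[of m m'] distinct[of m' m] distinct[of m' m'] that
      by (auto simp: t_def fun_eq_iff)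
    moreover have "integrable M (X i)" if "i \<in> ?J" for i
      using that in_I \<open>m < K\<close> \<open>m' < K\<close> square_integrable
      by (blast intro: square_integrable_imp_integrable indep[unfolded indep_vars_def, THEN conjunct1, rule_format])
    ultimately show "integrable M (t m m')" "expectation (t m m') = 0"
      using expectation_prod_indep_vars_eq_0[OF indep, of ?J "a m"] mean in_I that by auto
  qed
  have integrable: "integrable M (t m m')" if "m < K" "m' < K" for m m'
    using diagonal off_diagonal that by (cases "m = m'") auto
  have square: "(\<lambda>x. (\<Sum>m<K. X (a m) x * X (b m) x)\<^sup>2) = (\<lambda>x. \<Sum>m<K. \<Sum>m'<K. t m m' x)"
    by (simp add: t_def power2_eq_square sum_product)
  show "integrable M (\<lambda>x. (\<Sum>m<K. X (a m) x * X (b m) x)\<^sup>2)"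
    unfolding square using integrable by (intro Bochner_Integration.integrable_sum) auto
  have "expectation (\<lambda>x. \<Sum>m'<K. t m m' x) = expectation (t m m)" if "m < K" for m
  proof -
    have "expectation (\<lambda>x. \<Sum>m'<K. t m m' x) = (\<Sum>m'<K. if m' = m then expectation (t m m) else 0)"
      using that integrable off_diagonal by (intro integral_sum_eq) auto
    then show ?thesis
      using that by simp
  qed
  then show "expectation (\<lambda>x. (\<Sum>m<K. X (a m) x * X (b m) x)\<^sup>2)
      = (\<Sum>m<K. expectation (\<lambda>x. (X (a m) x)\<^sup>2) * expectation (\<lambda>x. (X (b m) x)\<^sup>2))"
    unfolding square using integrable diagonal
    by (intro integral_sum_eq Bochner_Integration.integrable_sum) auto
qed

section \<open>The number of received products\<close>

lemma (in prob_space) prob_hitting_set_eq: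
  assumes ind: "indep_vars (\<lambda>_. N) X I" and "finite I" and "S \<subseteq> I" and A: "A \<in> sets N"
    and p: "\<And>i. i \<in> I \<Longrightarrow> prob {\<omega> \<in> space M. X i \<omega> \<in> A} = p"
  shows "prob {\<omega> \<in> space M. {i \<in> I. X i \<omega> \<in> A} = S} = p ^ card S * (1 - p) ^ (card I - card S)"
proof (cases "I = {}")
  case True
  then show ?thesis using \<open>S \<subseteq> I\<close> by (simp add: prob_space)
next
  case False
  have X: "X i \<in> measurable M N" if "i \<in> I" for i
    using ind that by (simp add: indep_vars_def)
  define B where "B i = (if i \<in> S then A else space N - A)" for i
  have hit: "{\<omega> \<in> space M. X i \<omega> \<in> A} = X i -` A \<inter> space M" for i
    by auto
  obtain i0 where "i0 \<in> I"
    using False by blast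
  have hits_iff: "{i \<in> I. X i \<omega> \<in> A} = S \<longleftrightarrow> (\<forall>i\<in>I. X i \<omega> \<in> B i)" if "\<omega> \<in> space M" for \<omega>
    using \<open>S \<subseteq> I\<close> measurable_space[OF X that] by (auto simp: B_def)
  have "\<omega> \<in> {\<omega> \<in> space M. {i \<in> I. X i \<omega> \<in> A} = S} \<longleftrightarrow> \<omega> \<in> (\<Inter>i\<in>I. X i -` B i \<inter> space M)" for \<omega>
    using hits_iff[of \<omega>] \<open>i0 \<in> I\<close> by auto
  then have "{\<omega> \<in> space M. {i \<in> I. X i \<omega> \<in> A} = S} = (\<Inter>i\<in>I. X i -` B i \<inter> space M)"
    by blast
  moreover have "prob (X i -` B i \<inter> space M) = (if i \<in> S then p else 1 - p)" if "i \<in> I" for i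
  proof -
    have "X i -` (space N - A) \<inter> space M = space M - X i -` A \<inter> space M"
      using measurable_space[OF X[OF that]] by auto
    then show ?thesis
      using p[OF that] prob_compl[OF measurable_sets[OF X[OF that] A]] by (simp add: B_def hit)
  qed
  ultimately have "prob {\<omega> \<in> space M. {i \<in> I. X i \<omega> \<in> A} = S} = (\<Prod>i\<in>I. if i \<in> S then p else 1 - p)"
    using indep_varsD_finite[OF ind False \<open>finite I\<close>, of B] A by (simp add: B_def)
  also have "\<dots> = p ^ card S * (1 - p) ^ (card I - card S)"
  proof -
    have "I \<inter> {i. i \<in> S} = S" "I \<inter> - {i. i \<in> S} = I - S"
      using \<open>S \<subseteq> I\<close> by auto
    moreover have "card (I - S) = card I - card S"
      using \<open>S \<subseteq> I\<close> \<open>finite I\<close> by (simp add: card_Diff_subset finite_subset)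
    ultimately show ?thesis
      using \<open>finite I\<close> by (simp add: prod.If_cases)
  qed
  finally show ?thesis .
qed

lemma (in prob_space) prob_card_hitting_set_binomial:
  assumes ind: "indep_vars (\<lambda>_. N) X I" and "finite I" and A: "A \<in> sets N"
    and p: "\<And>i. i \<in> I \<Longrightarrow> prob {\<omega> \<in> space M. X i \<omega> \<in> A} = p"
  shows "prob {\<omega> \<in> space M. card {i \<in> I. X i \<omega> \<in> A} = k}
           = real (card I choose k) * (1 - p) ^ (card I - k) * p ^ k"
proof -
  define E where "E S = {\<omega> \<in> space M. {i \<in> I. X i \<omega> \<in> A} = S}" for S
  let ?Sk = "{S. S \<subseteq> I \<and> card S = k}"
  have X: "X i \<in> measurable M N" if "i \<in> I" for i
    using ind that by (simp add: indep_vars_def)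
  have "E S \<in> events" for S
  proof -
    have "E S = {\<omega> \<in> space M. \<forall>i\<in>I. (X i \<omega> \<in> A) = (i \<in> S)} \<inter> {\<omega> \<in> space M. S \<subseteq> I}"
      by (auto simp: E_def)
    also have "\<dots> \<in> events"
    proof (intro sets.Int sets.sets_Collect_finite_All \<open>finite I\<close>)
      fix i assume "i \<in> I"
      note [measurable] = X[OF this] A
      show "{\<omega> \<in> space M. (X i \<omega> \<in> A) = (i \<in> S)} \<in> events" by measurable
    qed auto
    finally show ?thesis .
  qed
  moreover have "{\<omega> \<in> space M. card {i \<in> I. X i \<omega> \<in> A} = k} = (\<Union>S\<in>?Sk. E S)"
    by (auto simp: E_def)
  moreover have "finite ?Sk"
    using \<open>finite I\<close> by (auto intro: finite_subset[of _ "Pow I"])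
  ultimately have "prob {\<omega> \<in> space M. card {i \<in> I. X i \<omega> \<in> A} = k} = (\<Sum>S\<in>?Sk. prob (E S))"
    by (auto intro!: finite_measure_finite_Union simp: disjoint_family_on_def E_def)
  also have "\<dots> = (\<Sum>S\<in>?Sk. p ^ k * (1 - p) ^ (card I - k))"
  proof (rule sum.cong[OF refl])
    fix S assume "S \<in> ?Sk"
    then show "prob (E S) = p ^ k * (1 - p) ^ (card I - k)"
      unfolding E_def using prob_hitting_set_eq[OF ind \<open>finite I\<close> _ A p, of S] by simp
  qed
  also have "\<dots> = real (card I choose k) * (1 - p) ^ (card I - k) * p ^ k"
    using n_subsets[OF \<open>finite I\<close>, of k] by simp
  finally show ?thesis .
qed

lemma (in prob_space) prob_less_eq_prob_le:
  assumes "random_variable borel X" and "prob {\<omega> \<in> space M. X \<omega> = c} = 0"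
  shows "prob {\<omega> \<in> space M. X \<omega> < c} = prob {\<omega> \<in> space M. (X \<omega> :: real) \<le> c}"
proof -
  note [measurable] = assms(1)
  have "{\<omega> \<in> space M. X \<omega> \<le> c} = {\<omega> \<in> space M. X \<omega> < c} \<union> {\<omega> \<in> space M. X \<omega> = c}"
    by auto
  moreover have "prob ({\<omega> \<in> space M. X \<omega> < c} \<union> {\<omega> \<in> space M. X \<omega> = c})
      = prob {\<omega> \<in> space M. X \<omega> < c} + prob {\<omega> \<in> space M. X \<omega> = c}"
    by (rule finite_measure_Union) auto
  ultimately show ?thesis using assms(2) by simp
qed

lemma (in prob_space) prob_card_rcv_binomial:
  assumes indep: "indep_vars (\<lambda>_. borel) T {..<W}"
    and cdf: "\<And>w t. w < W \<Longrightarrow> prob {\<omega> \<in> space M. T w \<omega> \<le> t} = F t"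
    and no_atom: "\<And>w. w < W \<Longrightarrow> prob {\<omega> \<in> space M. T w \<omega> = Tmax} = 0"
  shows "prob {\<omega> \<in> space M. card (rcv W T Tmax \<omega>) = k}
           = real (W choose k) * (1 - F Tmax) ^ (W - k) * F Tmax ^ k"
proof -
  have "prob {\<omega> \<in> space M. T w \<omega> \<in> {..<Tmax}} = F Tmax" if "w \<in> {..<W}" for w
    using prob_less_eq_prob_le[of "T w" Tmax] indep cdf no_atom that by (simp add: indep_vars_def)
  from prob_card_hitting_set_binomial[OF indep _ _ this]
  show ?thesis
    by (simp add: rcv_def)
qed

lemma measurable_hitting_set:
  assumes "finite I" and "A \<in> sets N"
  shows "(\<lambda>x. {i \<in> I. x i \<in> A}) \<in> measurable (PiM I (\<lambda>_. N)) (count_space (Pow I))"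
proof (subst measurable_count_space_eq2, simp add: \<open>finite I\<close>, intro conjI ballI)
  show "(\<lambda>x. {i \<in> I. x i \<in> A}) \<in> space (PiM I (\<lambda>_. N)) \<rightarrow> Pow I"
    by auto
  fix S assume "S \<in> Pow I"
  then have "(\<lambda>x. {i \<in> I. x i \<in> A}) -` {S} \<inter> space (PiM I (\<lambda>_. N))
      = {x \<in> space (PiM I (\<lambda>_. N)). \<forall>i\<in>I. (x i \<in> A) = (i \<in> S)}"
    by auto
  also have "\<dots> \<in> sets (PiM I (\<lambda>_. N))"
  proof (rule sets.sets_Collect_finite_All[OF _ \<open>finite I\<close>])
    fix i assume "i \<in> I"
    let ?hit = "(\<lambda>x. x i) -` A \<inter> space (PiM I (\<lambda>_. N))"
    have hit: "?hit \<in> sets (PiM I (\<lambda>_. N))"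
      using measurable_sets[OF measurable_component_singleton[OF \<open>i \<in> I\<close>] \<open>A \<in> sets N\<close>] .
    have "{x \<in> space (PiM I (\<lambda>_. N)). (x i \<in> A) = (i \<in> S)}
        = (if i \<in> S then ?hit else space (PiM I (\<lambda>_. N)) - ?hit)"
      by auto
    then show "{x \<in> space (PiM I (\<lambda>_. N)). (x i \<in> A) = (i \<in> S)} \<in> sets (PiM I (\<lambda>_. N))"
      using hit by auto
  qed
  finally show "(\<lambda>x. {i \<in> I. x i \<in> A}) -` {S} \<inter> space (PiM I (\<lambda>_. N)) \<in> sets (PiM I (\<lambda>_. N))" .
qed

lemma measurable_compose_hitting_set:
  fixes Mk :: "'k measure" and \<Phi> :: "'k \<Rightarrow> 'i set \<Rightarrow> 'c"
  assumes "finite I" and "A \<in> sets N" and "\<And>S. (\<lambda>k. \<Phi> k S) \<in> measurable Mk R"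
  shows "(\<lambda>x. \<Phi> (fst x) {i \<in> I. snd x i \<in> A}) \<in> measurable (Mk \<Otimes>\<^sub>M PiM I (\<lambda>_. N)) R"
proof (rule measurable_compose_countable'[where f = "\<lambda>S x. \<Phi> (fst x) S"])
  show "(\<lambda>x. {i \<in> I. snd x i \<in> A}) \<in> measurable (Mk \<Otimes>\<^sub>M PiM I (\<lambda>_. N)) (count_space (Pow I))"
    by (rule measurable_compose[OF measurable_snd measurable_hitting_set[OF assms(1,2)]])
  show "countable (Pow I)"
    using \<open>finite I\<close> by (simp add: countable_finite)
  fix S
  show "(\<lambda>x. \<Phi> (fst x) S) \<in> measurable (Mk \<Otimes>\<^sub>M PiM I (\<lambda>_. N)) R"
    using measurable_compose[OF measurable_fst assms(3)] .
qed

definition received_set :: "nat \<Rightarrow> real \<Rightarrow> 'k \<times> (nat \<Rightarrow> real) \<Rightarrow> nat set" where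
  "received_set W Tmax z = {w \<in> {..<W}. snd z w < Tmax}"

lemma rcv_eq_received_set: "rcv W T Tmax \<omega> = received_set W Tmax (K \<omega>, \<lambda>w\<in>{..<W}. T w \<omega>)"
  by (auto simp: rcv_def received_set_def)

lemma measurable_received_set:
  assumes "\<And>S. (\<lambda>k. \<Phi> k S) \<in> measurable Mk R"
  shows "(\<lambda>z. \<Phi> (fst z) (received_set W Tmax z)) \<in> measurable (Mk \<Otimes>\<^sub>M PiM {..<W} (\<lambda>_. borel)) R"
proof -
  have "(\<lambda>z. \<Phi> (fst z) {w \<in> {..<W}. snd z w \<in> {..<Tmax}}) \<in> measurable (Mk \<Otimes>\<^sub>M PiM {..<W} (\<lambda>_. borel)) R"
    by (rule measurable_compose_hitting_set) (use assms in auto)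
  then show ?thesis
    by (simp add: received_set_def)
qed

section \<open>Conditioning on a finite partition\<close>

lemma (in prob_space) integral_eq_sum_cond_exp_event:
  fixes X :: "'a \<Rightarrow> real" and Y :: "'a \<Rightarrow> 'b"
  assumes "finite V" and Y: "\<And>\<omega>. \<omega> \<in> space M \<Longrightarrow> Y \<omega> \<in> V"
    and events: "\<And>v. {\<omega> \<in> space M. Y \<omega> = v} \<in> events" and "integrable M X"
  shows "expectation X = (\<Sum>v\<in>V. prob {\<omega> \<in> space M. Y \<omega> = v} * cond_exp_event M X {\<omega> \<in> space M. Y \<omega> = v})"
proof -
  let ?E = "\<lambda>v. {\<omega> \<in> space M. Y \<omega> = v}"
  have "expectation X = expectation (\<lambda>\<omega>. \<Sum>v\<in>V. indicator (?E v) \<omega> * X \<omega>)"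
  proof (rule Bochner_Integration.integral_cong[OF refl])
    fix \<omega> assume "\<omega> \<in> space M"
    then have "(\<Sum>v\<in>V. indicator (?E v) \<omega> * X \<omega>) = (\<Sum>v\<in>V. if v = Y \<omega> then X \<omega> else 0)"
      by (intro sum.cong) (auto simp: indicator_def)
    then show "X \<omega> = (\<Sum>v\<in>V. indicator (?E v) \<omega> * X \<omega>)"
      using Y \<open>\<omega> \<in> space M\<close> \<open>finite V\<close> by simp
  qed
  also have "\<dots> = (\<Sum>v\<in>V. expectation (\<lambda>\<omega>. indicator (?E v) \<omega> * X \<omega>))"
    using events \<open>integrable M X\<close>
    by (intro Bochner_Integration.integral_sum) (simp add: integrable_real_mult_indicator mult.commute)
  also have "\<dots> = (\<Sum>v\<in>V. prob (?E v) * cond_exp_event M X (?E v))"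
  proof (rule sum.cong[OF refl])
    fix v
    show "expectation (\<lambda>\<omega>. indicator (?E v) \<omega> * X \<omega>) = prob (?E v) * cond_exp_event M X (?E v)"
    proof (cases "prob (?E v) = 0")
      case True
      \<comment> \<open>then \<open>cond_exp_event\<close> divides by zero, but the event contributes nothing anyway\<close>
      then have "?E v \<in> null_sets M"
        using events by (simp add: null_sets_def emeasure_eq_measure)
      then have "AE \<omega> in M. indicator (?E v) \<omega> * X \<omega> = 0"
        by (rule AE_mp[OF AE_not_in]) (simp add: indicator_def)
      then show ?thesis
        using True by (simp add: integral_eq_zero_AE)
    qed (simp add: cond_exp_event_def)
  qed
  finally show ?thesis .
qed

section \<open>The squared error of the estimate\<close>

lemma sum_pairs_by_class:
  fixes f :: "'l \<Rightarrow> real" and cls :: "nat \<Rightarrow> nat \<Rightarrow> 'l"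
  assumes "finite L" and "\<And>n p. n < N \<Longrightarrow> p < P \<Longrightarrow> cls n p \<in> L"
  shows "(\<Sum>n<N. \<Sum>p<P. f (cls n p)) = (\<Sum>l\<in>L. real (card {(n, p). n < N \<and> p < P \<and> cls n p = l}) * f l)"
proof -
  have "(\<Sum>n<N. \<Sum>p<P. f (cls n p)) = (\<Sum>x\<in>{..<N} \<times> {..<P}. f (case_prod cls x))"
    by (simp add: sum.cartesian_product split_def)
  also have "\<dots> = (\<Sum>l\<in>L. \<Sum>x\<in>{x \<in> {..<N} \<times> {..<P}. case_prod cls x = l}. f (case_prod cls x))"
    by (rule sum.group[symmetric]) (use assms in auto)
  also have "\<dots> = (\<Sum>l\<in>L. real (card {(n, p). n < N \<and> p < P \<and> cls n p = l}) * f l)"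
  proof (rule sum.cong[OF refl])
    fix l
    have "{x \<in> {..<N} \<times> {..<P}. case_prod cls x = l} = {(n, p). n < N \<and> p < P \<and> cls n p = l}"
      by auto
    moreover have "(\<Sum>x\<in>{(n, p). n < N \<and> p < P \<and> cls n p = l}. f (case_prod cls x))
        = (\<Sum>x\<in>{(n, p). n < N \<and> p < P \<and> cls n p = l}. f l)"
      by (rule sum.cong) auto
    ultimately show "(\<Sum>x\<in>{x \<in> {..<N} \<times> {..<P}. case_prod cls x = l}. f (case_prod cls x))
        = real (card {(n, p). n < N \<and> p < P \<and> cls n p = l}) * f l"
      by simp
  qed
  finally show ?thesis .
qed

definition block_index :: "nat \<Rightarrow> nat \<Rightarrow> nat \<Rightarrow> nat \<Rightarrow> nat \<Rightarrow> ((nat \<times> nat \<times> nat) + (nat \<times> nat \<times> nat)) set"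
  where "block_index N P U M Q = ({..<N} \<times> {..<U} \<times> {..<M}) <+> ({..<P} \<times> {..<M} \<times> {..<Q})"

definition block_entry :: "(nat \<Rightarrow> nat \<Rightarrow> nat \<Rightarrow> 'a \<Rightarrow> real) \<Rightarrow> (nat \<Rightarrow> nat \<Rightarrow> nat \<Rightarrow> 'a \<Rightarrow> real)
    \<Rightarrow> (nat \<times> nat \<times> nat) + (nat \<times> nat \<times> nat) \<Rightarrow> 'a \<Rightarrow> real"
  where "block_entry A B i \<omega> = (case i of Inl (n, u, m) \<Rightarrow> A n u m \<omega> | Inr (p, m, q) \<Rightarrow> B p m q \<omega>)"

text \<open>\<open>Z\<close> stands for all randomness other than the data (for NOW-UEP: the coding coefficients and
  the worker times); which classes are decoded is a function of \<open>Z\<close> alone.\<close>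

locale coded_block_product = prob_space \<Omega> for \<Omega> :: "'a measure" +
  fixes N P U M Q :: nat
    and A B :: "nat \<Rightarrow> nat \<Rightarrow> nat \<Rightarrow> 'a \<Rightarrow> real"
    and vA vB :: "nat \<Rightarrow> real"
    and cls :: "nat \<Rightarrow> nat \<Rightarrow> nat"
    and MZ :: "'z measure" and Z :: "'a \<Rightarrow> 'z"
    and decoded :: "'z \<Rightarrow> nat \<Rightarrow> bool"
  assumes indep_entries: "indep_vars (\<lambda>_. borel) (block_entry A B) (block_index N P U M Q)"
    and mean_A: "\<And>n u m. n < N \<Longrightarrow> u < U \<Longrightarrow> m < M \<Longrightarrow> expectation (A n u m) = 0"
    and mean_B: "\<And>p m q. p < P \<Longrightarrow> m < M \<Longrightarrow> q < Q \<Longrightarrow> expectation (B p m q) = 0"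
    and square_integrable_A: "\<And>n u m. n < N \<Longrightarrow> u < U \<Longrightarrow> m < M \<Longrightarrow> integrable \<Omega> (\<lambda>\<omega>. (A n u m \<omega>)\<^sup>2)"
    and square_integrable_B: "\<And>p m q. p < P \<Longrightarrow> m < M \<Longrightarrow> q < Q \<Longrightarrow> integrable \<Omega> (\<lambda>\<omega>. (B p m q \<omega>)\<^sup>2)"
    and variance_A: "\<And>n u m. n < N \<Longrightarrow> u < U \<Longrightarrow> m < M \<Longrightarrow> variance (A n u m) = vA n"
    and variance_B: "\<And>p m q. p < P \<Longrightarrow> m < M \<Longrightarrow> q < Q \<Longrightarrow> variance (B p m q) = vB p"
    and random_variable_Z: "random_variable MZ Z"
    and indep_entries_Z: "indep_set
        {(\<lambda>\<omega>. \<lambda>i\<in>block_index N P U M Q. block_entry A B i \<omega>) -` E \<inter> space \<Omega>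
           | E. E \<in> sets (PiM (block_index N P U M Q) (\<lambda>_. borel))}
        {Z -` E \<inter> space \<Omega> | E. E \<in> sets MZ}"
    and measurable_decoded: "\<And>l. (\<lambda>z. decoded z l) \<in> measurable MZ (count_space UNIV)"
begin

abbreviation sub_product :: "nat \<Rightarrow> nat \<Rightarrow> nat \<Rightarrow> nat \<Rightarrow> 'a \<Rightarrow> real" where
  "sub_product n p u q \<omega> \<equiv> blockprod M (\<lambda>n u m. A n u m \<omega>) (\<lambda>p m q. B p m q \<omega>) n p u q"

abbreviation squared_error :: "'a \<Rightarrow> real" where
  "squared_error \<omega> \<equiv> loss N P U M Q (\<lambda>n u m. A n u m \<omega>) (\<lambda>p m q. B p m q \<omega>) cls (decoded (Z \<omega>))"

lemma expectation_sub_product_square: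
  assumes "n < N" "p < P" "u < U" "q < Q"
  shows "integrable \<Omega> (\<lambda>\<omega>. (sub_product n p u q \<omega>)\<^sup>2)"
    and "expectation (\<lambda>\<omega>. (sub_product n p u q \<omega>)\<^sup>2) = M * vA n * vB p"
proof -
  let ?X = "block_entry A B" and ?I = "block_index N P U M Q"
  let ?a = "\<lambda>m. Inl (n, u, m)" and ?b = "\<lambda>m. Inr (p, m, q)"
  have mean: "expectation (?X i) = 0" if "i \<in> ?I" for i
    using that mean_A mean_B by (auto simp: block_index_def block_entry_def[abs_def])
  have square_integrable: "integrable \<Omega> (\<lambda>\<omega>. (?X i \<omega>)\<^sup>2)" if "i \<in> ?I" for i
    using that square_integrable_A square_integrable_B by (auto simp: block_index_def block_entry_def)
  have sub_product: "sub_product n p u q \<omega> = (\<Sum>m<M. ?X (?a m) \<omega> * ?X (?b m) \<omega>)" for \<omega>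
    by (simp add: blockprod_def block_entry_def)
  have "expectation (\<lambda>\<omega>. (?X (?a m) \<omega>)\<^sup>2) * expectation (\<lambda>\<omega>. (?X (?b m) \<omega>)\<^sup>2) = vA n * vB p"
    if "m < M" for m
    using variance_A[of n u m] variance_B[of p m q] mean_A[of n u m] mean_B[of p m q] assms that
    by (simp add: block_entry_def)
  then have second_moments:
    "(\<Sum>m<M. expectation (\<lambda>\<omega>. (?X (?a m) \<omega>)\<^sup>2) * expectation (\<lambda>\<omega>. (?X (?b m) \<omega>)\<^sup>2))
       = M * vA n * vB p"
    by simp
  have ranges: "inj_on ?a {..<M}" "inj_on ?b {..<M}" "?a ` {..<M} \<inter> ?b ` {..<M} = {}"
      "?a ` {..<M} \<subseteq> ?I" "?b ` {..<M} \<subseteq> ?I"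
    using assms by (auto simp: inj_on_def block_index_def)
  note second_moment = expectation_square_sum_indep_products[OF indep_entries ranges mean square_integrable]
  show "integrable \<Omega> (\<lambda>\<omega>. (sub_product n p u q \<omega>)\<^sup>2)"
    unfolding sub_product by (rule second_moment(1))
  show "expectation (\<lambda>\<omega>. (sub_product n p u q \<omega>)\<^sup>2) = M * vA n * vB p"
    unfolding sub_product by (subst second_moment(2)) (simp_all add: second_moments)
qed

lemma expectation_indicator_sub_product_square:
  assumes "n < N" "p < P" "u < U" "q < Q" and "S \<in> sets MZ"
  shows "integrable \<Omega> (\<lambda>\<omega>. indicator (Z -` S \<inter> space \<Omega>) \<omega> * (sub_product n p u q \<omega>)\<^sup>2)"
    and "expectation (\<lambda>\<omega>. indicator (Z -` S \<inter> space \<Omega>) \<omega> * (sub_product n p u q \<omega>)\<^sup>2)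
           = prob (Z -` S \<inter> space \<Omega>) * (M * vA n * vB p)"
proof -
  let ?I = "block_index N P U M Q"
  define X where "X \<omega> = (\<lambda>i\<in>?I. block_entry A B i \<omega>)" for \<omega>
  define h where "h x = (\<Sum>m<M. x (Inl (n, u, m)) * x (Inr (p, m, q)))\<^sup>2" for x :: "_ \<Rightarrow> real"
  have X: "random_variable (PiM ?I (\<lambda>_. borel)) X"
    unfolding X_def using indep_entries by (intro measurable_restrict) (simp add: indep_vars_def)
  have h: "h \<in> borel_measurable (PiM ?I (\<lambda>_. borel))"
    unfolding h_def using assms
    by (intro borel_measurable_power borel_measurable_sum borel_measurable_times
        measurable_component_singleton) (auto simp: block_index_def)
  have h_X: "h (X \<omega>) = (sub_product n p u q \<omega>)\<^sup>2" for \<omega>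
    unfolding h_def X_def blockprod_def using assms
    by (intro arg_cong[where f = "\<lambda>x. x\<^sup>2"] sum.cong) (auto simp: block_entry_def block_index_def)
  show "integrable \<Omega> (\<lambda>\<omega>. indicator (Z -` S \<inter> space \<Omega>) \<omega> * (sub_product n p u q \<omega>)\<^sup>2)"
    and "expectation (\<lambda>\<omega>. indicator (Z -` S \<inter> space \<Omega>) \<omega> * (sub_product n p u q \<omega>)\<^sup>2)
           = prob (Z -` S \<inter> space \<Omega>) * (M * vA n * vB p)"
    using expectation_mult_indicator_indep[OF indep_entries_Z[folded X_def] X random_variable_Z h
        \<open>S \<in> sets MZ\<close>] expectation_sub_product_square[OF assms(1-4)]
    by (simp_all add: h_X)
qed

lemma indicator_squared_error_eq_sum:
  "indicator (Z -` S \<inter> space \<Omega>) \<omega> * squared_error \<omega>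
    = (\<Sum>n<N. \<Sum>p<P. \<Sum>u<U. \<Sum>q<Q.
         indicator (Z -` (S - {z. decoded z (cls n p)}) \<inter> space \<Omega>) \<omega> * (sub_product n p u q \<omega>)\<^sup>2)"
  unfolding loss_def sum_distrib_left by (intro sum.cong refl) (auto simp: indicator_def)

lemma expectation_indicator_squared_error:
  assumes S: "S \<in> sets MZ"
  shows "integrable \<Omega> (\<lambda>\<omega>. indicator (Z -` S \<inter> space \<Omega>) \<omega> * squared_error \<omega>)"
    and "expectation (\<lambda>\<omega>. indicator (Z -` S \<inter> space \<Omega>) \<omega> * squared_error \<omega>)
         = (\<Sum>n<N. \<Sum>p<P. real (M * U * Q) * vA n * vB p
              * prob (Z -` (S - {z. decoded z (cls n p)}) \<inter> space \<Omega>))"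
proof -
  have undecoded_sets: "S - {z. decoded z l} \<in> sets MZ" for l
  proof -
    have "(\<lambda>z. decoded z l) -` {True} \<inter> space MZ \<in> sets MZ"
      by (rule measurable_sets[OF measurable_decoded]) simp
    moreover have "S - {z. decoded z l} = S - (\<lambda>z. decoded z l) -` {True} \<inter> space MZ"
      using sets.sets_into_space[OF S] by auto
    ultimately show ?thesis
      using S by simp
  qed
  define f where "f n p u q \<omega> =
      indicator (Z -` (S - {z. decoded z (cls n p)}) \<inter> space \<Omega>) \<omega> * (sub_product n p u q \<omega>)\<^sup>2"
    for n p u q \<omega>
  have f: "integrable \<Omega> (f n p u q)"
    "expectation (f n p u q) = prob (Z -` (S - {z. decoded z (cls n p)}) \<inter> space \<Omega>) * (M * vA n * vB p)"
    if "n < N" "p < P" "u < U" "q < Q" for n p u q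
    unfolding f_def[abs_def]
    using expectation_indicator_sub_product_square[OF that undecoded_sets] by simp_all
  have squared_error: "(\<lambda>\<omega>. indicator (Z -` S \<inter> space \<Omega>) \<omega> * squared_error \<omega>)
      = (\<lambda>\<omega>. \<Sum>n<N. \<Sum>p<P. \<Sum>u<U. \<Sum>q<Q. f n p u q \<omega>)"
    by (simp add: f_def indicator_squared_error_eq_sum)
  show "integrable \<Omega> (\<lambda>\<omega>. indicator (Z -` S \<inter> space \<Omega>) \<omega> * squared_error \<omega>)"
    unfolding squared_error by (auto intro!: Bochner_Integration.integrable_sum f)
  have "expectation (\<lambda>\<omega>. \<Sum>n<N. \<Sum>p<P. \<Sum>u<U. \<Sum>q<Q. f n p u q \<omega>)
      = (\<Sum>n<N. \<Sum>p<P. \<Sum>u<U. \<Sum>q<Q.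
           prob (Z -` (S - {z. decoded z (cls n p)}) \<inter> space \<Omega>) * (M * vA n * vB p))"
    by (intro integral_sum_eq Bochner_Integration.integrable_sum f) auto
  then show "expectation (\<lambda>\<omega>. indicator (Z -` S \<inter> space \<Omega>) \<omega> * squared_error \<omega>)
      = (\<Sum>n<N. \<Sum>p<P. real (M * U * Q) * vA n * vB p
           * prob (Z -` (S - {z. decoded z (cls n p)}) \<inter> space \<Omega>))"
    unfolding squared_error by (simp add: mult_ac)
qed

lemma integrable_squared_error: "integrable \<Omega> squared_error"
proof -
  have "integrable \<Omega> (\<lambda>\<omega>. indicator (Z -` space MZ \<inter> space \<Omega>) \<omega> * squared_error \<omega>)
      \<longleftrightarrow> integrable \<Omega> squared_error"
    using measurable_space[OF random_variable_Z] by (intro Bochner_Integration.integrable_cong) auto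
  then show ?thesis
    using expectation_indicator_squared_error(1)[OF sets.top] by simp
qed

lemma cond_exp_event_squared_error:
  assumes S: "S \<in> sets MZ" and nonzero: "prob (Z -` S \<inter> space \<Omega>) \<noteq> 0"
  shows "cond_exp_event \<Omega> squared_error (Z -` S \<inter> space \<Omega>)
    = (\<Sum>n<N. \<Sum>p<P. real (M * U * Q) * vA n * vB p
         * (1 - cond_prob \<Omega> {\<omega> \<in> space \<Omega>. decoded (Z \<omega>) (cls n p)} (Z -` S \<inter> space \<Omega>)))"
proof -
  let ?E = "Z -` S \<inter> space \<Omega>"
  have undecoded: "prob (Z -` (S - {z. decoded z l}) \<inter> space \<Omega>)
      = prob ?E * (1 - cond_prob \<Omega> {\<omega> \<in> space \<Omega>. decoded (Z \<omega>) l} ?E)" for l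
  proof -
    let ?D = "{\<omega> \<in> space \<Omega>. decoded (Z \<omega>) l}"
    have "(\<lambda>\<omega>. decoded (Z \<omega>) l) -` {True} \<inter> space \<Omega> \<in> events"
      by (rule measurable_sets[OF measurable_compose[OF random_variable_Z measurable_decoded]]) simp
    then have "?D \<in> events"
      by (simp add: vimage_def Int_def conj_commute)
    moreover have "Z -` (S - {z. decoded z l}) \<inter> space \<Omega> = ?E - ?D"
      by auto
    ultimately have "prob (Z -` (S - {z. decoded z l}) \<inter> space \<Omega>) = prob ?E - prob (?D \<inter> ?E)"
      using finite_measure_Diff'[OF measurable_sets[OF random_variable_Z S], of ?D]
      by (simp add: Int_commute)
    then show ?thesis
      using nonzero by (simp add: cond_prob_def right_diff_distrib)
  qed
  show ?thesis
    using nonzero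
    by (simp add: cond_exp_event_def expectation_indicator_squared_error(2)[OF S] undecoded
        sum_divide_distrib mult_ac)
qed

lemma cond_exp_event_squared_error_by_class:
  assumes "S \<in> sets MZ" and "prob (Z -` S \<inter> space \<Omega>) \<noteq> 0"
    and cls_range: "\<And>n p. n < N \<Longrightarrow> p < P \<Longrightarrow> cls n p \<in> {1..L}"
    and "\<And>n p. n < N \<Longrightarrow> p < P \<Longrightarrow> vA n = v1 (cls n p)"
    and "\<And>n p. n < N \<Longrightarrow> p < P \<Longrightarrow> vB p = v2 (cls n p)"
  shows "cond_exp_event \<Omega> squared_error (Z -` S \<inter> space \<Omega>)
    = (\<Sum>l=1..L. real (card {(n, p). n < N \<and> p < P \<and> cls n p = l})
         * (1 - cond_prob \<Omega> {\<omega> \<in> space \<Omega>. decoded (Z \<omega>) l} (Z -` S \<inter> space \<Omega>))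
         * real (M * U * Q) * v1 l * v2 l)"
proof -
  let ?f = "\<lambda>l. real (M * U * Q) * v1 l * v2 l
      * (1 - cond_prob \<Omega> {\<omega> \<in> space \<Omega>. decoded (Z \<omega>) l} (Z -` S \<inter> space \<Omega>))"
  have "cond_exp_event \<Omega> squared_error (Z -` S \<inter> space \<Omega>) = (\<Sum>n<N. \<Sum>p<P. ?f (cls n p))"
    unfolding cond_exp_event_squared_error[OF assms(1,2)] using assms(4,5)
    by (intro sum.cong refl) simp
  also have "\<dots> = (\<Sum>l=1..L. real (card {(n, p). n < N \<and> p < P \<and> cls n p = l}) * ?f l)"
    by (rule sum_pairs_by_class) (use cls_range in auto)
  finally show ?thesis
    by (simp add: mult_ac)
qed

end

theorem theorem1:
  fixes \<Omega> :: "'a measure"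
    and N P U M Q W L :: nat
    and A :: "nat \<Rightarrow> nat \<Rightarrow> nat \<Rightarrow> 'a \<Rightarrow> real"   (* A n u m \<omega> : entry (u,m) of block A_n *)
    and B :: "nat \<Rightarrow> nat \<Rightarrow> nat \<Rightarrow> 'a \<Rightarrow> real"   (* B p m q \<omega> : entry (m,q) of block B_p *)
    and vA vB :: "nat \<Rightarrow> real"                      (* variances sigma_{A_n}^2, sigma_{B_p}^2 *)
    and cls :: "nat \<Rightarrow> nat \<Rightarrow> nat"                  (* importance class of sub-product C_np *)
    and v1 v2 :: "nat \<Rightarrow> real"                      (* sigma_{l,1}^2, sigma_{l,2}^2 *)
    and T :: "nat \<Rightarrow> 'a \<Rightarrow> real"                   (* worker computation times *)
    and F :: "real \<Rightarrow> real" and Tmax :: real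
    and Mk :: "'k measure" and K :: "'a \<Rightarrow> 'k"     (* coding randomness of NOW-UEP *)
    and dec :: "'k \<Rightarrow> nat set \<Rightarrow> nat \<Rightarrow> bool"     (* class l decoded from received set *)
  defines "Ient \<equiv> ({..<N} \<times> {..<U} \<times> {..<M}) <+> ({..<P} \<times> {..<M} \<times> {..<Q})"
      and "entry \<equiv> (\<lambda>i \<omega>. case i of Inl (n, u, m) \<Rightarrow> A n u m \<omega> | Inr (p, m, q) \<Rightarrow> B p m q \<omega>)"
      and "Nrec \<equiv> (\<lambda>\<omega>. card (rcv W T Tmax \<omega>))"
      and "Loss \<equiv> (\<lambda>\<omega>. loss N P U M Q (\<lambda>n u m. A n u m \<omega>) (\<lambda>p m q. B p m q \<omega>) cls
                          (dec (K \<omega>) (rcv W T Tmax \<omega>)))"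
      and "nl \<equiv> (\<lambda>l. card {(n, p). n < N \<and> p < P \<and> cls n p = l})"
      and "Pd \<equiv> (\<lambda>l w. cond_prob \<Omega> {\<omega> \<in> space \<Omega>. dec (K \<omega>) (rcv W T Tmax \<omega>) l}
                                   {\<omega> \<in> space \<Omega>. card (rcv W T Tmax \<omega>) = w})"
      and "PN \<equiv> (\<lambda>w. real (W choose w) * (1 - F Tmax) ^ (W - w) * F Tmax ^ w)"
  assumes prob: "prob_space \<Omega>"
    (* all entries of A and B independent, zero mean, with the block variances *)
    and indep_entries: "prob_space.indep_vars \<Omega> (\<lambda>_. borel) entry Ient"
    and meanA: "\<And>n u m. n < N \<Longrightarrow> u < U \<Longrightarrow> m < M \<Longrightarrow> integral\<^sup>L \<Omega> (A n u m) = 0"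
    and meanB: "\<And>p m q. p < P \<Longrightarrow> m < M \<Longrightarrow> q < Q \<Longrightarrow> integral\<^sup>L \<Omega> (B p m q) = 0"
    and sqintA: "\<And>n u m. n < N \<Longrightarrow> u < U \<Longrightarrow> m < M \<Longrightarrow> integrable \<Omega> (\<lambda>\<omega>. (A n u m \<omega>)\<^sup>2)"
    and sqintB: "\<And>p m q. p < P \<Longrightarrow> m < M \<Longrightarrow> q < Q \<Longrightarrow> integrable \<Omega> (\<lambda>\<omega>. (B p m q \<omega>)\<^sup>2)"
    and varA: "\<And>n u m. n < N \<Longrightarrow> u < U \<Longrightarrow> m < M \<Longrightarrow> prob_space.variance \<Omega> (A n u m) = vA n"
    and varB: "\<And>p m q. p < P \<Longrightarrow> m < M \<Longrightarrow> q < Q \<Longrightarrow> prob_space.variance \<Omega> (B p m q) = vB p"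
    (* classes 1..L, with the class variances *)
    and cls_range: "\<And>n p. n < N \<Longrightarrow> p < P \<Longrightarrow> cls n p \<in> {1..L}"
    and cls_varA: "\<And>n p. n < N \<Longrightarrow> p < P \<Longrightarrow> vA n = v1 (cls n p)"
    and cls_varB: "\<And>n p. n < N \<Longrightarrow> p < P \<Longrightarrow> vB p = v2 (cls n p)"
    (* worker times i.i.d. with CDF F *)
    and indep_T: "prob_space.indep_vars \<Omega> (\<lambda>_. borel) T {..<W}"
    and cdf: "\<And>w t. w < W \<Longrightarrow> measure \<Omega> {\<omega> \<in> space \<Omega>. T w \<omega> \<le> t} = F t"
    and no_atom: "\<And>w. w < W \<Longrightarrow> measure \<Omega> {\<omega> \<in> space \<Omega>. T w \<omega> = Tmax} = 0"
    (* decoding is a measurable function of the coding randomness and the received set *)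
    and dec_meas: "\<And>S l. (\<lambda>k. dec k S l) \<in> measurable Mk (count_space UNIV)"
    (* worker times and coding randomness independent of the entries of A, B *)
    and K_meas: "K \<in> measurable \<Omega> Mk"
    and indep_data: "prob_space.indep_set \<Omega>
        {(\<lambda>\<omega>. \<lambda>i\<in>Ient. entry i \<omega>) -` E \<inter> space \<Omega> | E. E \<in> sets (PiM Ient (\<lambda>_. borel))}
        {(\<lambda>\<omega>. (K \<omega>, \<lambda>w\<in>{..<W}. T w \<omega>)) -` E \<inter> space \<Omega>
           | E. E \<in> sets (Mk \<Otimes>\<^sub>M PiM {..<W} (\<lambda>_. borel))}"
  shows "(\<forall>w\<le>W. measure \<Omega> {\<omega> \<in> space \<Omega>. Nrec \<omega> = w} = PN w)
       \<and> integral\<^sup>L \<Omega> Loss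
           = (\<Sum>w\<le>W. PN w * cond_exp_event \<Omega> Loss {\<omega> \<in> space \<Omega>. Nrec \<omega> = w})
       \<and> (\<forall>w\<le>W. PN w > 0 \<longrightarrow>
            cond_exp_event \<Omega> Loss {\<omega> \<in> space \<Omega>. Nrec \<omega> = w}
              = (\<Sum>l=1..L. real (nl l) * (1 - Pd l w) * real (M * U * Q) * v1 l * v2 l))"
proof -
  interpret prob_space \<Omega>
    by (rule prob)
  define Z where "Z = (\<lambda>\<omega>. (K \<omega>, \<lambda>w\<in>{..<W}. T w \<omega>))"
  define MZ where "MZ = Mk \<Otimes>\<^sub>M PiM {..<W} (\<lambda>_. borel :: real measure)"
  let ?received = "received_set W Tmax"
  have rcv: "rcv W T Tmax \<omega> = ?received (Z \<omega>)" for \<omega>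
    by (simp add: rcv_eq_received_set Z_def)
  interpret coded_block_product \<Omega> N P U M Q A B vA vB cls MZ Z "\<lambda>z. dec (fst z) (?received z)"
  proof
    show "random_variable MZ Z"
      using K_meas indep_T unfolding Z_def MZ_def indep_vars_def
      by (intro measurable_Pair measurable_restrict) auto
  qed (use assms measurable_received_set[OF dec_meas] in
      \<open>simp_all add: Ient_def entry_def block_index_def block_entry_def[abs_def] Z_def MZ_def\<close>)
  define Bw where "Bw w = {z \<in> space MZ. card (?received z) = w}" for w
  have "(\<lambda>z. card (?received z) = w) \<in> measurable MZ (count_space UNIV)" for w
    unfolding MZ_def by (rule measurable_received_set) simp
  then have "(\<lambda>z. card (?received z) = w) -` {True} \<inter> space MZ \<in> sets MZ" for w
    by (rule measurable_sets) simp
  then have Bw: "Bw w \<in> sets MZ" "{\<omega> \<in> space \<Omega>. Nrec \<omega> = w} = Z -` Bw w \<inter> space \<Omega>" for w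
    using measurable_space[OF random_variable_Z]
    by (auto simp: Bw_def Nrec_def rcv vimage_def Int_def conj_commute)
  have fst_Z: "fst (Z \<omega>) = K \<omega>" for \<omega>
    by (simp add: Z_def)
  have Loss: "Loss = squared_error"
    by (simp add: Loss_def rcv fst_Z)
  have prob_Nrec: "prob {\<omega> \<in> space \<Omega>. Nrec \<omega> = w} = PN w" for w
    using prob_card_rcv_binomial[OF indep_T cdf no_atom] by (simp add: Nrec_def PN_def)
  have "integral\<^sup>L \<Omega> Loss = (\<Sum>w\<le>W. PN w * cond_exp_event \<Omega> Loss {\<omega> \<in> space \<Omega>. Nrec \<omega> = w})"
  proof (subst integral_eq_sum_cond_exp_event[where Y = Nrec and V = "{..W}"])
    show "Nrec \<omega> \<in> {..W}" for \<omega>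
      using card_mono[of "{..<W}" "rcv W T Tmax \<omega>"] by (auto simp: Nrec_def rcv_def)
    show "{\<omega> \<in> space \<Omega>. Nrec \<omega> = w} \<in> events" for w
      unfolding Bw(2) by (rule measurable_sets[OF random_variable_Z Bw(1)])
  qed (simp_all add: prob_Nrec Loss integrable_squared_error)
  moreover have "cond_exp_event \<Omega> Loss {\<omega> \<in> space \<Omega>. Nrec \<omega> = w}
      = (\<Sum>l=1..L. real (nl l) * (1 - Pd l w) * real (M * U * Q) * v1 l * v2 l)"
    if "PN w > 0" for w
  proof -
    have "prob (Z -` Bw w \<inter> space \<Omega>) \<noteq> 0"
      using that prob_Nrec[of w] Bw(2)[of w] by simp
    from cond_exp_event_squared_error_by_class[OF Bw(1) this cls_range cls_varA cls_varB]
    show ?thesis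
      by (simp add: Loss nl_def Pd_def Bw(2)[symmetric] Nrec_def rcv[symmetric] fst_Z)
  qed
  ultimately show ?thesis
    using prob_Nrec by simp
qed

end
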